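(* For every graph $G$ with exactly $\ell$ vertices of degree $1$, $\mathrm{sp}(G)\ge \lceil 2(\ell-1)/3\rceil$.
   Context: A family of subsets $V_1,\dots,V_k$ of a set $V$ is a separating system of $V$ if for every two distinct $u,v\in V$ there is $i$ with $|V_i\cap\{u,v\}|=1$. For a graph $G$, $\mathrm{sp}(G)$ is the minimum size of a family $\mathcal P$ of paths in $G$ (single-vertex paths allowed) such that $\{V(P):P\in\mathcal P\}$ is a separating system of $V(G)$. *)

theory Defs
  imports Complex_Main
begin

definition simple_graph :: "'a set \<Rightarrow> ('a \<Rightarrow> 'a \<Rightarrow> bool) \<Rightarrow> bool" where
  "simple_graph V E \<longleftrightarrow> finite V \<and> (\<forall>u v. E u v \<longrightarrow> u \<in> V \<and> v \<in> V \<and> u \<noteq> v)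
      \<and> (\<forall>u v. E u v \<longrightarrow> E v u)"

definition degree :: "'a set \<Rightarrow> ('a \<Rightarrow> 'a \<Rightarrow> bool) \<Rightarrow> 'a \<Rightarrow> nat" where
  "degree V E v = card {u \<in> V. E v u}"

definition is_path :: "'a set \<Rightarrow> ('a \<Rightarrow> 'a \<Rightarrow> bool) \<Rightarrow> 'a list \<Rightarrow> bool" where
  "is_path V E p \<longleftrightarrow> p \<noteq> [] \<and> distinct p \<and> set p \<subseteq> V
      \<and> (\<forall>i. Suc i < length p \<longrightarrow> E (p ! i) (p ! Suc i))"

definition separating_system :: "'a set \<Rightarrow> 'a set set \<Rightarrow> bool" where
  "separating_system V F \<longleftrightarrow> (\<forall>S\<in>F. S \<subseteq> V)
      \<and> (\<forall>u\<in>V. \<forall>v\<in>V. u \<noteq> v \<longrightarrow> (\<exists>S\<in>F. card (S \<inter> {u, v}) = 1))"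

definition sp :: "'a set \<Rightarrow> ('a \<Rightarrow> 'a \<Rightarrow> bool) \<Rightarrow> nat" where
  "sp V E = (LEAST k. \<exists>P. finite P \<and> card P = k \<and> (\<forall>p\<in>P. is_path V E p)
      \<and> separating_system V (set ` P))"

end

theory Submission
  imports Defs
begin

text \<open>A vertex of degree 1 can only be an endpoint of a path, so each path of a
  separating family contains at most two of the \<open>l\<close> leaves. Separation means that
  distinct leaves lie on distinct sets of paths: hence at most one leaf lies on no path,
  and the leaves lying on exactly one path are assigned injectively to that path.
  Counting the incidences between leaves and paths then gives \<open>2 l \<le> 3 sp + 2\<close>.\<close>

lemma interior_path_vertex_degree_ge_2:
  assumes G: "simple_graph V E" and p: "is_path V E p"
    and "0 < i" and "Suc i < length p"
  shows "2 \<le> degree V E (p ! i)"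
proof -
  have adj: "E (p ! j) (p ! Suc j)" if "Suc j < length p" for j
    using p that by (simp add: is_path_def)
  have "E (p ! (i - 1)) (p ! i)"
    using adj[of "i - 1"] \<open>0 < i\<close> \<open>Suc i < length p\<close> by simp
  then have "E (p ! i) (p ! (i - 1))"
    using G by (simp add: simple_graph_def)
  moreover have "E (p ! i) (p ! Suc i)"
    using adj \<open>Suc i < length p\<close> .
  ultimately have nbrs: "{p ! (i - 1), p ! Suc i} \<subseteq> {u \<in> V. E (p ! i) u}"
    using G by (auto simp: simple_graph_def)
  have "p ! (i - 1) \<noteq> p ! Suc i"
    using p \<open>0 < i\<close> \<open>Suc i < length p\<close> by (simp add: is_path_def nth_eq_iff_index_eq)
  then have "2 = card {p ! (i - 1), p ! Suc i}"
    by simp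
  also have "\<dots> \<le> card {u \<in> V. E (p ! i) u}"
    using nbrs G by (intro card_mono) (simp_all add: simple_graph_def)
  finally show ?thesis
    by (simp add: degree_def)
qed

lemma degree_one_vertex_on_path_is_endpoint:
  assumes G: "simple_graph V E" and p: "is_path V E p"
    and "x \<in> set p" and "degree V E x = 1"
  shows "x \<in> {hd p, last p}"
proof -
  obtain i where i: "i < length p" "x = p ! i"
    using \<open>x \<in> set p\<close> by (auto simp: in_set_conv_nth)
  have "\<not> (0 < i \<and> Suc i < length p)"
    using interior_path_vertex_degree_ge_2[OF G p, of i] i \<open>degree V E x = 1\<close> by auto
  then have "i = 0 \<or> i = length p - 1"
    using i(1) by linarith
  moreover have "p \<noteq> []"
    using p by (simp add: is_path_def)
  ultimately show ?thesis
    using i by (auto simp: hd_conv_nth last_conv_nth)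
qed

lemma card_degree_one_vertices_on_path_le_2:
  assumes "simple_graph V E" and "is_path V E p"
  shows "card (set p \<inter> {v \<in> V. degree V E v = 1}) \<le> 2"
proof -
  have "set p \<inter> {v \<in> V. degree V E v = 1} \<subseteq> {hd p, last p}"
    using degree_one_vertex_on_path_is_endpoint[OF assms] by blast
  then have "card (set p \<inter> {v \<in> V. degree V E v = 1}) \<le> card {hd p, last p}"
    by (intro card_mono) simp_all
  also have "\<dots> \<le> 2"
    by (simp add: card_insert_if)
  finally show ?thesis .
qed

lemma separating_system_inj_on:
  assumes "separating_system V F"
  shows "inj_on (\<lambda>x. {S \<in> F. x \<in> S}) V"
proof (rule inj_onI, rule ccontr)
  fix x y
  assume "x \<in> V" "y \<in> V" and same: "{S \<in> F. x \<in> S} = {S \<in> F. y \<in> S}" and "x \<noteq> y"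
  then obtain S where "S \<in> F" and one: "card (S \<inter> {x, y}) = 1"
    using assms unfolding separating_system_def by blast
  have "x \<in> S \<longleftrightarrow> y \<in> S"
    using same \<open>S \<in> F\<close> by blast
  then show False
    using one \<open>x \<noteq> y\<close> by (cases "x \<in> S") (simp_all add: Int_insert_right)
qed

lemma card_uncovered_le_1:
  assumes "inj_on (\<lambda>x. {S \<in> F. x \<in> S}) L"
  shows "card {x \<in> L. {S \<in> F. x \<in> S} = {}} \<le> 1"
proof -
  have "card {x \<in> L. {S \<in> F. x \<in> S} = {}} \<le> card {{} :: 'a set set}"
    by (rule card_inj_on_le[where f = "\<lambda>x. {S \<in> F. x \<in> S}"])
      (auto intro: inj_on_subset[OF assms])
  then show ?thesis
    by simp
qed

lemma card_covered_once_le: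
  assumes "finite F" and "inj_on (\<lambda>x. {S \<in> F. x \<in> S}) L"
  shows "card {x \<in> L. card {S \<in> F. x \<in> S} = 1} \<le> card F"
proof -
  have "card {x \<in> L. card {S \<in> F. x \<in> S} = 1} \<le> card ((\<lambda>S. {S}) ` F)"
  proof (rule card_inj_on_le[where f = "\<lambda>x. {S \<in> F. x \<in> S}"])
    show "inj_on (\<lambda>x. {S \<in> F. x \<in> S}) {x \<in> L. card {S \<in> F. x \<in> S} = 1}"
      using assms(2) by (rule inj_on_subset) auto
    show "(\<lambda>x. {S \<in> F. x \<in> S}) ` {x \<in> L. card {S \<in> F. x \<in> S} = 1} \<subseteq> (\<lambda>S. {S}) ` F"
    proof clarify
      fix x
      assume "card {S \<in> F. x \<in> S} = 1"
      then obtain T where "{S \<in> F. x \<in> S} = {T}"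
        by (rule card_1_singletonE)
      then show "{S \<in> F. x \<in> S} \<in> (\<lambda>S. {S}) ` F"
        by auto
    qed
  qed (use assms(1) in simp)
  also have "\<dots> \<le> card F"
    using assms(1) by (rule card_image_le)
  finally show ?thesis .
qed

lemma sum_card_containing_eq_sum_card_Int:
  assumes "finite F" and "finite L"
  shows "(\<Sum>x\<in>L. card {S \<in> F. x \<in> S}) = (\<Sum>S\<in>F. card (S \<inter> L))"
proof -
  have "(\<Sum>x\<in>L. card {S \<in> F. x \<in> S}) = (\<Sum>x\<in>L. \<Sum>S\<in>F. of_bool (x \<in> S))"
    using assms(1) by (simp add: Int_def Collect_conj_eq[symmetric] conj_commute)
  also have "\<dots> = (\<Sum>S\<in>F. \<Sum>x\<in>L. of_bool (x \<in> S))"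
    by (rule sum.swap)
  also have "\<dots> = (\<Sum>S\<in>F. card (S \<inter> L))"
    using assms(2) by (simp add: Int_commute Int_def)
  finally show ?thesis .
qed

lemma card_le_by_separating_family:
  assumes "finite F" and "finite L"
    and inj: "inj_on (\<lambda>x. {S \<in> F. x \<in> S}) L"
    and small: "\<And>S. S \<in> F \<Longrightarrow> card (S \<inter> L) \<le> k"
  shows "2 * card L \<le> (k + 1) * card F + 2"
proof -
  define c where "c x = card {S \<in> F. x \<in> S}" for x
  have "2 * card L = (\<Sum>x\<in>L. 2)"
    by simp
  also have "\<dots> \<le> (\<Sum>x\<in>L. c x + of_bool (c x = 1) + 2 * of_bool (c x = 0))"
    by (intro sum_mono) auto
  also have "\<dots> = (\<Sum>x\<in>L. c x) + card {x \<in> L. c x = 1} + 2 * card {x \<in> L. c x = 0}"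
    using \<open>finite L\<close> by (simp add: sum.distrib sum_distrib_left[symmetric] Int_def)
  also have "(\<Sum>x\<in>L. c x) = (\<Sum>S\<in>F. card (S \<inter> L))"
    unfolding c_def using assms(1,2) by (rule sum_card_containing_eq_sum_card_Int)
  also have "\<dots> \<le> k * card F"
    using sum_mono[of F "\<lambda>S. card (S \<inter> L)" "\<lambda>_. k"] small by (simp add: mult.commute)
  also have "card {x \<in> L. c x = 1} \<le> card F"
    unfolding c_def using assms(1) inj by (rule card_covered_once_le)
  also have "card {x \<in> L. c x = 0} \<le> 1"
    using card_uncovered_le_1[OF inj] assms(1) by (simp add: c_def)
  finally show ?thesis
    by simp
qed

lemma sp_attained:
  assumes "finite V"
  obtains P where "finite P" "card P = sp V E" "\<forall>p\<in>P. is_path V E p"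
    "separating_system V (set ` P)"
proof -
  let ?singletons = "(\<lambda>v. [v]) ` V"
  let ?Q = "\<lambda>k. \<exists>P. finite P \<and> card P = k \<and> (\<forall>p\<in>P. is_path V E p)
      \<and> separating_system V (set ` P)"
  have "separating_system V (set ` ?singletons)"
    unfolding separating_system_def
  proof (intro conjI ballI impI)
    fix u v
    assume "u \<in> V" "v \<in> V" "u \<noteq> v"
    then show "\<exists>S\<in>set ` ?singletons. card (S \<inter> {u, v}) = 1"
      by (intro bexI[of _ "{u}"]) (auto simp: image_image)
  qed auto
  moreover have "\<forall>p\<in>?singletons. is_path V E p"
    by (auto simp: is_path_def)
  ultimately have "?Q (card ?singletons)"
    using assms by blast
  then have "?Q (sp V E)"
    unfolding sp_def by (rule LeastI)
  then show ?thesis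
    using that by blast
qed

theorem lemma2p4:
  fixes V :: "'a set" and E :: "'a \<Rightarrow> 'a \<Rightarrow> bool" and l :: nat
  assumes "simple_graph V E"
    and "card {v \<in> V. degree V E v = 1} = l"
  shows "int (sp V E) \<ge> \<lceil>2 * (real l - 1) / 3\<rceil>"
proof -
  have "finite V"
    using assms(1) by (simp add: simple_graph_def)
  then obtain P where P: "finite P" "card P = sp V E" "\<forall>p\<in>P. is_path V E p"
    and sep: "separating_system V (set ` P)"
    by (rule sp_attained)
  let ?L = "{v \<in> V. degree V E v = 1}"
  have "inj_on (\<lambda>x. {S \<in> set ` P. x \<in> S}) ?L"
    using separating_system_inj_on[OF sep] by (rule inj_on_subset) auto
  moreover have "card (S \<inter> ?L) \<le> 2" if "S \<in> set ` P" for S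
    using that P(3) card_degree_one_vertices_on_path_le_2[OF assms(1)] by auto
  ultimately have "2 * card ?L \<le> 3 * card (set ` P) + 2"
    using card_le_by_separating_family[of "set ` P" ?L 2] P(1) \<open>finite V\<close> by simp
  moreover have "card (set ` P) \<le> sp V E"
    using P(1,2) card_image_le by metis
  ultimately have "2 * l \<le> 3 * sp V E + 2"
    using assms(2) by linarith
  then have "2 * real l \<le> 3 * real (sp V E) + 2"
    by linarith
  then show ?thesis
    by (simp add: ceiling_le_iff)
qed

end
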